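(* For every nonnegative integer $k$, the following identity of formal power series in an indeterminate $z$ holds (the paper writes $z=[t]_q$): $$\sum_{n\ge 0}W_{m,r}[n,k]_q\,\frac{z^{n}}{[n]_q!}=\frac{1}{[k]_{q^m}!\,[m]_q^{k}}\sum_{j=0}^{k}(-1)^{k-j}\,q^{m\binom{k-j}{2}}\begin{bmatrix}k\\ j\end{bmatrix}_{q^m}e_q\big([jm+r]_q\,z\big),$$ where $e_q(x)=\sum_{n\ge0}\frac{x^n}{[n]_q!}$ is the $q$-exponential function.
   Context: Fix a real number $q>0$ with $q\neq 1$, a positive integer $m$ and a complex number $r$. For complex $x$ put $q^x=e^{x\ln q}$ and $[x]_q=\frac{1-q^x}{1-q}$. For $p>0$, $p\ne 1$ and integers $0\le j\le k$: $[i]_p=\frac{1-p^i}{1-p}$, $[k]_p!=\prod_{i=1}^{k}[i]_p$ (with $[0]_p!=1$), and $\begin{bmatrix}k\\ j\end{bmatrix}_p=\frac{[k]_p!}{[j]_p!\,[k-j]_p!}$. The numbers $W_{m,r}[n,k]_q$ (a $q$-analogue of the $r$-Whitney numbers of the second kind), for integers $n,k$, are defined by $W_{m,r}[0,0]_q=1$, $W_{m,r}[n,k]_q=0$ whenever $n<k$ or $n<0$ or $k<0$, and, for $n\ge 1$ and $0\le k\le n$, $$W_{m,r}[n,k]_q=q^{m(k-1)+r}\,W_{m,r}[n-1,k-1]_q+[mk+r]_q\,W_{m,r}[n-1,k]_q .$$ *)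

theory Defs
  imports Complex_Main "HOL-Computational_Algebra.Formal_Power_Series"
begin

definition qpow :: "real \<Rightarrow> complex \<Rightarrow> complex" where
  "qpow q x = exp (x * complex_of_real (ln q))"

definition qbr :: "real \<Rightarrow> complex \<Rightarrow> complex" where
  "qbr q x = (1 - qpow q x) / complex_of_real (1 - q)"

definition qint :: "real \<Rightarrow> nat \<Rightarrow> real" where
  "qint p i = (1 - p ^ i) / (1 - p)"

definition qfact :: "real \<Rightarrow> nat \<Rightarrow> real" where
  "qfact p k = (\<Prod>i=1..k. qint p i)"

definition qbinom :: "real \<Rightarrow> nat \<Rightarrow> nat \<Rightarrow> real" where
  "qbinom p k j = qfact p k / (qfact p j * qfact p (k - j))"

text \<open>q-analogue of the r-Whitney numbers of the second kind, W_{m,r}[n,k]_q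
  (for natural n, k; values at negative indices are 0).\<close>
fun Wq :: "real \<Rightarrow> nat \<Rightarrow> complex \<Rightarrow> nat \<Rightarrow> nat \<Rightarrow> complex" where
  "Wq q m r 0 k = (if k = 0 then 1 else 0)"
| "Wq q m r (Suc n) k =
     (if Suc n < k then 0
      else (if k = 0 then 0
            else qpow q (of_nat (m * (k - 1)) + r) * Wq q m r n (k - 1))
           + qbr q (of_nat (m * k) + r) * Wq q m r n k)"

definition qexp :: "real \<Rightarrow> complex fps" where
  "qexp q = Abs_fps (\<lambda>n. 1 / complex_of_real (qfact q n))"

end

theory Submission
  imports Defs
begin

(* Expanding e_q([jm+r]_q z), the coefficient of z^n/[n]_q! on the right-hand side is a
   finite sum, so the theorem amounts to the explicit formula
     W[n,k] = [m]_q^(-k) * sum_{j<=k} u(k,j) * x_j^n,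
   with nodes x_j = [jm+r]_q and, for p = q^m,
     u(k,j) = (-1)^(k-j) * p^((k-j) choose 2) / ([j]_p! * [k-j]_p!).
   This is proved by induction on n. For n = 0 it is Gauss's identity sum_j u(k,j) = 0 for k > 0.
   In the step, the node differences factor as x_j - x_(k+1) = -q^r * p^j * [m]_q * [k+1-j]_p,
   and [k+1-j]_p * u(k+1,j) = -p^(k-j) * u(k,j), so the explicit sum obeys the defining
   recurrence of W. *)

lemma qint_0 [simp]: "qint p 0 = 0"
  by (simp add: qint_def)

lemma qfact_Suc: "qfact p (Suc k) = qfact p k * qint p (Suc k)"
  by (simp add: qfact_def)

lemma qint_add:
  assumes "p \<noteq> 1"
  shows "qint p (i + j) = qint p i + p ^ i * qint p j"
  using assms by (simp add: qint_def power_add field_simps)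

lemma power_neq_one:
  fixes p :: real
  assumes "p > 0" "p \<noteq> 1" "i > 0"
  shows "p ^ i \<noteq> 1"
  using assms power_eq_1_iff[of p i] by auto

lemma qint_nonzero:
  assumes "p > 0" "p \<noteq> 1" "i > 0"
  shows "qint p i \<noteq> 0"
  using power_neq_one[OF assms] assms(2) by (simp add: qint_def)

lemma qfact_nonzero:
  assumes "p > 0" "p \<noteq> 1"
  shows "qfact p k \<noteq> 0"
  using qint_nonzero[OF assms] by (simp add: qfact_def)

lemma qint_mult_qint_power: "qint q m * qint (q ^ m) d = qint q (m * d)"
proof (cases "q ^ m = 1")
  case True
  then show ?thesis by (simp add: qint_def power_mult)
next
  case False
  then have "q \<noteq> 1" by auto
  with False show ?thesis by (simp add: qint_def power_mult)
qed

lemma qpow_of_nat_add: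
  assumes "q > 0"
  shows "qpow q (of_nat a + r) = of_real (q ^ a) * qpow q r"
proof -
  have "exp (complex_of_real (ln q)) = of_real q"
    using assms by (subst exp_of_real) simp
  then have "exp (of_nat a * complex_of_real (ln q)) = of_real q ^ a"
    by (simp add: exp_of_nat_mult)
  then show ?thesis by (simp add: qpow_def distrib_right exp_add)
qed

lemma qbr_of_nat_add_diff:
  assumes "q > 0"
  shows "qbr q (of_nat a + r) - qbr q (of_nat (a + b) + r)
    = - (qpow q r * of_real (q ^ a * qint q b))"
proof (cases "q = 1")
  case False
  have "qpow q (of_nat (a + b) + r) = of_real (q ^ a * q ^ b) * qpow q r"
    using qpow_of_nat_add[OF assms, of "a + b"] by (simp add: power_add)
  moreover have "complex_of_real (1 - q) \<noteq> 0" using False by simp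
  ultimately show ?thesis
    unfolding qbr_def qint_def qpow_of_nat_add[OF assms]
    by (simp add: divide_simps) (simp add: algebra_simps)
qed (simp add: qbr_def qint_def)

definition whitney_coeff :: "real \<Rightarrow> nat \<Rightarrow> nat \<Rightarrow> real" where
  "whitney_coeff p k j = (-1) ^ (k - j) * p ^ ((k - j) choose 2) / (qfact p j * qfact p (k - j))"

lemma qbinom_eq_whitney_coeff:
  "(-1) ^ (k - j) * p ^ ((k - j) choose 2) * qbinom p k j = qfact p k * whitney_coeff p k j"
  by (simp add: whitney_coeff_def qbinom_def)

lemma qint_mult_whitney_coeff_Suc_Suc:
  assumes "p > 0" "p \<noteq> 1" "j \<le> k"
  shows "qint p (Suc j) * whitney_coeff p (Suc k) (Suc j) = whitney_coeff p k j"
  using assms qfact_nonzero[OF assms(1,2)] qint_nonzero[OF assms(1,2), of "Suc j"]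
  by (simp add: whitney_coeff_def qfact_Suc field_simps)

lemma qint_mult_whitney_coeff_add_Suc:
  assumes "p > 0" "p \<noteq> 1"
  shows "qint p (Suc d) * whitney_coeff p (j + Suc d) j = - (p ^ d * whitney_coeff p (j + d) j)"
proof -
  have "Suc d choose 2 = (d choose 2) + d" by (simp add: numeral_2_eq_2)
  then show ?thesis
    using qfact_nonzero[OF assms] qint_nonzero[OF assms, of "Suc d"]
    by (simp add: whitney_coeff_def qfact_Suc field_simps power_add)
qed

lemma sum_whitney_coeff_Suc:
  assumes "p > 0" "p \<noteq> 1"
  shows "qint p (Suc k) * (\<Sum>j=0..Suc k. whitney_coeff p (Suc k) j)
    = (1 - p ^ k) * (\<Sum>j=0..k. whitney_coeff p k j)"
proof -
  have split: "qint p (Suc k) = qint p j + p ^ j * qint p (Suc k - j)" if "j \<le> Suc k" for j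
    using qint_add[OF assms(2), of j "Suc k - j"] that by simp
  have shift: "(\<Sum>j=0..Suc k. qint p j * whitney_coeff p (Suc k) j) = (\<Sum>j=0..k. whitney_coeff p k j)"
    unfolding sum.atLeast0_atMost_Suc_shift
    by (simp add: qint_mult_whitney_coeff_Suc_Suc[OF assms])
  have "p ^ j * qint p (Suc k - j) * whitney_coeff p (Suc k) j = - (p ^ k * whitney_coeff p k j)"
    if "j \<le> k" for j
  proof -
    obtain d where "k = j + d" using \<open>j \<le> k\<close> le_Suc_ex by blast
    then show ?thesis
      using qint_mult_whitney_coeff_add_Suc[OF assms, of d j] by (simp add: power_add mult.assoc)
  qed
  then have reflect: "(\<Sum>j=0..Suc k. p ^ j * qint p (Suc k - j) * whitney_coeff p (Suc k) j)
      = - (p ^ k * (\<Sum>j=0..k. whitney_coeff p k j))"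
    by (simp add: sum.atLeast0_atMost_Suc sum_distrib_left sum_negf)
  have "qint p (Suc k) * (\<Sum>j=0..Suc k. whitney_coeff p (Suc k) j)
      = (\<Sum>j=0..Suc k. qint p j * whitney_coeff p (Suc k) j)
        + (\<Sum>j=0..Suc k. p ^ j * qint p (Suc k - j) * whitney_coeff p (Suc k) j)"
    unfolding sum_distrib_left sum.distrib[symmetric]
    by (rule sum.cong) (auto simp: split algebra_simps)
  then show ?thesis
    unfolding shift reflect by (simp add: algebra_simps)
qed

lemma sum_whitney_coeff:
  assumes "p > 0" "p \<noteq> 1"
  shows "(\<Sum>j=0..k. whitney_coeff p k j) = (if k = 0 then 1 else 0)"
proof (induction k)
  case 0
  then show ?case by (simp add: whitney_coeff_def qfact_def numeral_2_eq_2)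
next
  case (Suc k)
  then have "qint p (Suc k) * (\<Sum>j=0..Suc k. whitney_coeff p (Suc k) j) = 0"
    using sum_whitney_coeff_Suc[OF assms, of k] by (cases k) simp_all
  then show ?case using qint_nonzero[OF assms, of "Suc k"] by simp
qed

definition whitney_node :: "real \<Rightarrow> nat \<Rightarrow> complex \<Rightarrow> nat \<Rightarrow> complex" where
  "whitney_node q m r j = qbr q (of_nat (j * m) + r)"

lemma whitney_coeff_mult_node_diff:
  assumes "q > 0" "q \<noteq> 1" "m > 0" "j \<le> k"
  shows "of_real (whitney_coeff (q ^ m) (Suc k) j) * (whitney_node q m r j - whitney_node q m r (Suc k))
    = qpow q r * of_real ((q ^ m) ^ k * qint q m) * of_real (whitney_coeff (q ^ m) k j)"
proof -
  obtain d where k: "k = j + d" using \<open>j \<le> k\<close> le_Suc_ex by blast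
  have p: "q ^ m > 0" "q ^ m \<noteq> 1" using assms power_neq_one[of q m] by auto
  have "Suc k * m = j * m + Suc d * m" by (simp add: k algebra_simps)
  then have "whitney_node q m r j - whitney_node q m r (Suc k)
      = - (qpow q r * of_real (q ^ (j * m) * qint q (m * Suc d)))"
    unfolding whitney_node_def by (simp only: qbr_of_nat_add_diff[OF assms(1)] mult.commute)
  also have "q ^ (j * m) * qint q (m * Suc d) = (q ^ m) ^ j * qint q m * qint (q ^ m) (Suc d)"
    by (simp add: qint_mult_qint_power mult.commute flip: power_mult)
  finally have diff: "whitney_node q m r j - whitney_node q m r (Suc k)
      = - (qpow q r * of_real ((q ^ m) ^ j * qint q m * qint (q ^ m) (Suc d)))" .
  have "of_real (whitney_coeff (q ^ m) (Suc k) j) * (whitney_node q m r j - whitney_node q m r (Suc k))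
      = - (qpow q r * of_real ((q ^ m) ^ j * qint q m * (qint (q ^ m) (Suc d) * whitney_coeff (q ^ m) (j + Suc d) j)))"
    unfolding diff by (simp add: k algebra_simps)
  also have "\<dots> = qpow q r * of_real ((q ^ m) ^ j * qint q m * ((q ^ m) ^ d * whitney_coeff (q ^ m) (j + d) j))"
    by (simp only: qint_mult_whitney_coeff_add_Suc[OF p]) simp
  finally show ?thesis
    by (simp add: k power_add algebra_simps)
qed

definition whitney_explicit :: "real \<Rightarrow> nat \<Rightarrow> complex \<Rightarrow> nat \<Rightarrow> nat \<Rightarrow> complex" where
  "whitney_explicit q m r n k =
     (\<Sum>j=0..k. of_real (whitney_coeff (q ^ m) k j) * whitney_node q m r j ^ n) / of_real (qint q m) ^ k"

lemma whitney_explicit_0: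
  assumes "q > 0" "q \<noteq> 1" "m > 0"
  shows "whitney_explicit q m r 0 k = (if k = 0 then 1 else 0)"
proof -
  have "q ^ m > 0" "q ^ m \<noteq> 1" using assms power_neq_one[of q m] by auto
  then show ?thesis
    using sum_whitney_coeff[of "q ^ m" k] by (simp add: whitney_explicit_def flip: of_real_sum)
qed

lemma whitney_explicit_Suc_0:
  "whitney_explicit q m r (Suc n) 0 = qbr q r * whitney_explicit q m r n 0"
  by (simp add: whitney_explicit_def whitney_node_def)

lemma whitney_explicit_Suc_Suc:
  assumes "q > 0" "q \<noteq> 1" "m > 0"
  shows "whitney_explicit q m r (Suc n) (Suc k)
    = qpow q (of_nat (m * k) + r) * whitney_explicit q m r n k
      + qbr q (of_nat (m * Suc k) + r) * whitney_explicit q m r n (Suc k)"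
proof -
  define c where "c k j = (of_real (whitney_coeff (q ^ m) k j) :: complex)" for k j
  define x where "x = whitney_node q m r"
  define P where "P = qpow q r * of_real ((q ^ m) ^ k * qint q m)"
  have "(\<Sum>j=0..Suc k. c (Suc k) j * x j ^ Suc n) - x (Suc k) * (\<Sum>j=0..Suc k. c (Suc k) j * x j ^ n)
      = (\<Sum>j=0..k. c (Suc k) j * (x j - x (Suc k)) * x j ^ n)"
    by (simp add: sum.atLeast0_atMost_Suc sum_distrib_left algebra_simps flip: sum_subtractf)
  also have "\<dots> = P * (\<Sum>j=0..k. c k j * x j ^ n)"
    unfolding sum_distrib_left
    by (rule sum.cong) (simp_all add: c_def x_def P_def whitney_coeff_mult_node_diff[OF assms])
  finally have numerator: "(\<Sum>j=0..Suc k. c (Suc k) j * x j ^ Suc n)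
      = x (Suc k) * (\<Sum>j=0..Suc k. c (Suc k) j * x j ^ n) + P * (\<Sum>j=0..k. c k j * x j ^ n)"
    by (simp add: algebra_simps)
  have "qpow q (of_nat (m * k) + r) * of_real (qint q m) = P"
    using qpow_of_nat_add[OF assms(1), of "m * k" r] by (simp add: P_def power_mult)
  moreover have "of_real (qint q m) \<noteq> (0 :: complex)" using qint_nonzero[OF assms] by simp
  ultimately show ?thesis
    unfolding whitney_explicit_def c_def[symmetric] x_def[symmetric] numerator
    by (simp add: x_def whitney_node_def field_simps)
qed

lemma Wq_Suc_0: "Wq q m r (Suc n) 0 = qbr q r * Wq q m r n 0"
  by simp

lemma Wq_eq_0: "n < k \<Longrightarrow> Wq q m r n k = 0"
  by (cases n) auto

lemma Wq_Suc_Suc: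
  "Wq q m r (Suc n) (Suc k)
    = qpow q (of_nat (m * k) + r) * Wq q m r n k + qbr q (of_nat (m * Suc k) + r) * Wq q m r n (Suc k)"
  by (auto simp: Wq_eq_0)

lemma Wq_eq_whitney_explicit:
  assumes "q > 0" "q \<noteq> 1" "m > 0"
  shows "Wq q m r n k = whitney_explicit q m r n k"
proof (induction n arbitrary: k)
  case 0
  then show ?case by (simp add: whitney_explicit_0[OF assms])
next
  case (Suc n)
  then show ?case
    by (cases k) (simp_all only: Wq_Suc_0 whitney_explicit_Suc_0 Wq_Suc_Suc whitney_explicit_Suc_Suc[OF assms])
qed

theorem theorem4:
  fixes q :: real and m k :: nat and r :: complex
  assumes "q > 0" and "q \<noteq> 1" and "m > 0"
  shows "Abs_fps (\<lambda>n. Wq q m r n k / complex_of_real (qfact q n))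
    = fps_const (1 / (complex_of_real (qfact (q ^ m) k) * complex_of_real (qint q m) ^ k))
      * (\<Sum>j=0..k. fps_const ((-1) ^ (k - j) * complex_of_real (q ^ (m * ((k - j) choose 2)))
                                * complex_of_real (qbinom (q ^ m) k j))
            * fps_compose (qexp q) (fps_const (qbr q (of_nat (j * m) + r)) * fps_X))"
    (is "?L = fps_const (1 / (?F * ?D)) * (\<Sum>j=0..k. fps_const (?b j) * ?e j)")
proof (rule fps_ext)
  fix n
  have "q ^ m > 0" "q ^ m \<noteq> 1" using assms power_neq_one[of q m] by auto
  then have "?F \<noteq> 0" using qfact_nonzero by simp
  have "?b j = ?F * of_real (whitney_coeff (q ^ m) k j)" for j
    using arg_cong[OF qbinom_eq_whitney_coeff[of k j "q ^ m"], of complex_of_real]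
    by (simp add: power_mult)
  then have "fps_nth (fps_const (1 / (?F * ?D)) * (\<Sum>j=0..k. fps_const (?b j) * ?e j)) n
      = 1 / (?F * ?D) * (\<Sum>j=0..k. ?F * of_real (whitney_coeff (q ^ m) k j)
        * (whitney_node q m r j ^ n * (1 / of_real (qfact q n))))"
    by (simp only: fps_mult_left_const_nth fps_sum_nth fps_compose_linear qexp_def
        fps_nth_Abs_fps whitney_node_def)
  also have "\<dots> = whitney_explicit q m r n k / of_real (qfact q n)"
    using \<open>?F \<noteq> 0\<close>
    by (simp add: whitney_explicit_def sum_distrib_left sum_divide_distrib field_simps)
  finally show "fps_nth ?L n = fps_nth (fps_const (1 / (?F * ?D)) * (\<Sum>j=0..k. fps_const (?b j) * ?e j)) n"
    by (simp add: Wq_eq_whitney_explicit[OF assms])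
qed

end
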